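(* Let $\mathbf{P_0},\mathbf{P_1}$ be $n\times n$ transition probability matrices of irreducible and aperiodic Markov chains on $n$ states, let $\mathbf{P_t}=(1-t)\mathbf{P_0}+t\mathbf{P_1}$ for $t\in[0,1]$, and let $\pi_1$ be the stationary distribution of $\mathbf{P_1}$. Then for every $\epsilon>0$, $$t_{ad}(\mathbf{P_0},\mathbf{P_1},\epsilon)\le\frac{2\,t_{mix}^2(\mathbf{P_1},\epsilon/2)}{\epsilon}.$$
   Context: Distributions are row vectors; $\|\mu-\nu\|_{TV}=\frac12\|\mu-\nu\|_1$. For an irreducible aperiodic transition matrix $\mathbf{P}$ with stationary distribution $\pi$, $t_{mix}(\mathbf{P},\epsilon)=\inf\{T\in\mathbb{N}: \|\nu\mathbf{P}^T-\pi\|_{TV}\le\epsilon \text{ for all distributions }\nu\}$. The adiabatic time is $$t_{ad}(\mathbf{P_0},\mathbf{P_1},\epsilon)=\inf\{T^*\in\mathbb{N}: \max_\nu\|\nu\mathbf{P_0}\mathbf{P_{1/T}}\mathbf{P_{2/T}}\cdots\mathbf{P_1}-\pi_1\|_{TV}\le\epsilon \text{ for all } T\in\mathbb{N},\,T\ge T^*\},$$ the maximum being over all probability distributions $\nu$ and the product being $\mathbf{P_{0/T}}\mathbf{P_{1/T}}\cdots\mathbf{P_{T/T}}$. *)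

theory Defs
  imports Complex_Main
begin

text \<open>Matrices are functions 'n \<Rightarrow> 'n \<Rightarrow> real (row i, column j);
  distributions are row vectors 'n \<Rightarrow> real.\<close>

definition stochastic :: "('n::finite \<Rightarrow> 'n \<Rightarrow> real) \<Rightarrow> bool" where
  "stochastic P \<longleftrightarrow> (\<forall>i j. 0 \<le> P i j) \<and> (\<forall>i. (\<Sum>j\<in>UNIV. P i j) = 1)"

definition distribution :: "('n::finite \<Rightarrow> real) \<Rightarrow> bool" where
  "distribution \<nu> \<longleftrightarrow> (\<forall>i. 0 \<le> \<nu> i) \<and> (\<Sum>i\<in>UNIV. \<nu> i) = 1"

definition matmul :: "('n::finite \<Rightarrow> 'n \<Rightarrow> real) \<Rightarrow> ('n \<Rightarrow> 'n \<Rightarrow> real) \<Rightarrow> 'n \<Rightarrow> 'n \<Rightarrow> real" where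
  "matmul A B = (\<lambda>i k. \<Sum>j\<in>UNIV. A i j * B j k)"

fun matpow :: "('n::finite \<Rightarrow> 'n \<Rightarrow> real) \<Rightarrow> nat \<Rightarrow> 'n \<Rightarrow> 'n \<Rightarrow> real" where
  "matpow P 0 = (\<lambda>i j. if i = j then 1 else 0)"
| "matpow P (Suc k) = matmul (matpow P k) P"

definition vecmat :: "('n::finite \<Rightarrow> real) \<Rightarrow> ('n \<Rightarrow> 'n \<Rightarrow> real) \<Rightarrow> 'n \<Rightarrow> real" where
  "vecmat \<nu> P = (\<lambda>j. \<Sum>i\<in>UNIV. \<nu> i * P i j)"

definition tv_dist :: "('n::finite \<Rightarrow> real) \<Rightarrow> ('n \<Rightarrow> real) \<Rightarrow> real" where
  "tv_dist \<mu> \<nu> = (1/2) * (\<Sum>i\<in>UNIV. \<bar>\<mu> i - \<nu> i\<bar>)"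

definition irreducible_chain :: "('n::finite \<Rightarrow> 'n \<Rightarrow> real) \<Rightarrow> bool" where
  "irreducible_chain P \<longleftrightarrow> (\<forall>i j. \<exists>k. 0 < matpow P k i j)"

definition aperiodic_chain :: "('n::finite \<Rightarrow> 'n \<Rightarrow> real) \<Rightarrow> bool" where
  "aperiodic_chain P \<longleftrightarrow> (\<forall>i. Gcd {k. 1 \<le> k \<and> 0 < matpow P k i i} = 1)"

definition stationary :: "('n::finite \<Rightarrow> 'n \<Rightarrow> real) \<Rightarrow> ('n \<Rightarrow> real) \<Rightarrow> bool" where
  "stationary P \<pi> \<longleftrightarrow> distribution \<pi> \<and> vecmat \<pi> P = \<pi>"

definition t_mix :: "('n::finite \<Rightarrow> 'n \<Rightarrow> real) \<Rightarrow> ('n \<Rightarrow> real) \<Rightarrow> real \<Rightarrow> nat" where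
  "t_mix P \<pi> \<epsilon> = Inf {T. \<forall>\<nu>. distribution \<nu> \<longrightarrow> tv_dist (vecmat \<nu> (matpow P T)) \<pi> \<le> \<epsilon>}"

definition interp :: "('n::finite \<Rightarrow> 'n \<Rightarrow> real) \<Rightarrow> ('n \<Rightarrow> 'n \<Rightarrow> real) \<Rightarrow> real \<Rightarrow> 'n \<Rightarrow> 'n \<Rightarrow> real" where
  "interp P0 P1 t = (\<lambda>i j. (1 - t) * P0 i j + t * P1 i j)"

definition adiabatic_evol :: "('n::finite \<Rightarrow> 'n \<Rightarrow> real) \<Rightarrow> ('n \<Rightarrow> 'n \<Rightarrow> real) \<Rightarrow> nat \<Rightarrow> ('n \<Rightarrow> real) \<Rightarrow> 'n \<Rightarrow> real" where
  "adiabatic_evol P0 P1 T \<nu> = foldl (\<lambda>\<mu> i. vecmat \<mu> (interp P0 P1 (real i / real T))) \<nu> [0..<Suc T]"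

definition adiabatic_set :: "('n::finite \<Rightarrow> 'n \<Rightarrow> real) \<Rightarrow> ('n \<Rightarrow> 'n \<Rightarrow> real) \<Rightarrow> ('n \<Rightarrow> real) \<Rightarrow> real \<Rightarrow> nat set" where
  "adiabatic_set P0 P1 \<pi>1 \<epsilon> = {Tstar. \<forall>T. 1 \<le> T \<and> Tstar \<le> T \<longrightarrow>
      (\<forall>\<nu>. distribution \<nu> \<longrightarrow> tv_dist (adiabatic_evol P0 P1 T \<nu>) \<pi>1 \<le> \<epsilon>)}"

definition t_ad :: "('n::finite \<Rightarrow> 'n \<Rightarrow> real) \<Rightarrow> ('n \<Rightarrow> 'n \<Rightarrow> real) \<Rightarrow> ('n \<Rightarrow> real) \<Rightarrow> real \<Rightarrow> nat" where
  "t_ad P0 P1 \<pi>1 \<epsilon> = Inf (adiabatic_set P0 P1 \<pi>1 \<epsilon>)"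

end

theory Submission
  imports Defs
begin

text \<open>Irreducibility and aperiodicity make some power of \<open>P\<^sub>1\<close> strictly positive, so \<open>P\<^sub>1\<close>
  mixes and \<open>\<tau> = t\<^sub>m\<^sub>i\<^sub>x(P\<^sub>1, \<epsilon>/2)\<close> is attained. In the adiabatic product, the last
  \<open>\<tau>\<close> factors \<open>P\<^bsub>i/T\<^esub>\<close> differ from \<open>P\<^sub>1\<close> by at most \<open>(\<tau> - 1)/T\<close> in total
  variation, and since stochastic matrices do not increase \<open>\<ell>\<^sub>1\<close> distances these errors
  add up to at most \<open>\<tau>(\<tau> - 1)/T\<close>. Replacing those factors by \<open>P\<^sub>1\<^sup>\<tau>\<close> brings any
  distribution within \<open>\<epsilon>/2\<close> of \<open>\<pi>\<^sub>1\<close>, so the total error is at most \<open>\<epsilon>\<close> once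
  \<open>T \<ge> 2\<tau>\<^sup>2/\<epsilon>\<close>.\<close>

definition l1_norm :: "('n::finite \<Rightarrow> real) \<Rightarrow> real" where
  "l1_norm w = (\<Sum>i\<in>UNIV. \<bar>w i\<bar>)"

lemma vecmat_matmul: "vecmat \<nu> (matmul A B) = vecmat (vecmat \<nu> A) B"
proof (rule ext)
  fix k
  have "(\<Sum>i\<in>UNIV. \<nu> i * (\<Sum>j\<in>UNIV. A i j * B j k)) = (\<Sum>i\<in>UNIV. \<Sum>j\<in>UNIV. \<nu> i * A i j * B j k)"
    by (simp add: sum_distrib_left mult.assoc)
  also have "\<dots> = (\<Sum>j\<in>UNIV. \<Sum>i\<in>UNIV. \<nu> i * A i j * B j k)" by (rule sum.swap)
  also have "\<dots> = (\<Sum>j\<in>UNIV. (\<Sum>i\<in>UNIV. \<nu> i * A i j) * B j k)"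
    by (simp add: sum_distrib_right)
  finally show "vecmat \<nu> (matmul A B) k = vecmat (vecmat \<nu> A) B k"
    unfolding vecmat_def matmul_def .
qed

lemma vecmat_unit: "vecmat (\<lambda>l. if l = i then 1 else 0) A = A i"
  unfolding vecmat_def by (auto simp: fun_eq_iff if_distrib[where f="\<lambda>c. c * _"] cong: if_cong)

lemma vecmat_id [simp]: "vecmat \<nu> (\<lambda>i j. if i = j then 1 else 0) = \<nu>"
  by (simp add: vecmat_def fun_eq_iff if_distrib sum.delta' cong: if_cong)

lemma vecmat_matpow_add:
  "vecmat \<nu> (matpow P (a + b)) = vecmat (vecmat \<nu> (matpow P a)) (matpow P b)"
  by (induction b) (simp_all add: vecmat_matmul)

lemma vecmat_matpow_Suc_left: "vecmat \<nu> (matpow P (Suc n)) = vecmat (vecmat \<nu> P) (matpow P n)"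
  using vecmat_matpow_add[of \<nu> P 1 n] by (simp add: vecmat_matmul)

lemma vecmat_matpow_mult: "vecmat \<nu> (matpow P (r * k)) = vecmat \<nu> (matpow (matpow P r) k)"
proof (induction k)
  case (Suc k)
  then show ?case by (simp add: add.commute[of r] vecmat_matpow_add vecmat_matmul)
qed simp

lemma matpow_add_entry: "matpow P (a + b) i j = (\<Sum>l\<in>UNIV. matpow P a i l * matpow P b l j)"
  using fun_cong[OF vecmat_matpow_add[of "\<lambda>l. if l = i then 1 else 0" P a b], of j]
  by (simp add: vecmat_unit vecmat_def)

lemma vecmat_diff: "vecmat (\<lambda>i. a i - b i) P = (\<lambda>j. vecmat a P j - vecmat b P j)"
  by (simp add: vecmat_def fun_eq_iff left_diff_distrib sum_subtractf)

lemma sum_vecmat_stochastic: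
  assumes "stochastic Q" shows "sum (vecmat w Q) UNIV = sum w UNIV"
proof -
  have "sum (vecmat w Q) UNIV = (\<Sum>i\<in>UNIV. \<Sum>j\<in>UNIV. w i * Q i j)"
    unfolding vecmat_def by (rule sum.swap)
  also have "\<dots> = sum w UNIV"
    by (simp add: sum_distrib_left[symmetric] assms[unfolded stochastic_def])
  finally show ?thesis .
qed

lemma distribution_vecmat:
  assumes "distribution \<nu>" "stochastic P" shows "distribution (vecmat \<nu> P)"
  using assms sum_vecmat_stochastic[OF assms(2), of \<nu>]
  unfolding distribution_def stochastic_def vecmat_def by (auto intro!: sum_nonneg)

lemma distribution_vecmat_matpow:
  "distribution \<nu> \<Longrightarrow> stochastic P \<Longrightarrow> distribution (vecmat \<nu> (matpow P n))"
  by (induction n) (simp_all add: vecmat_matmul distribution_vecmat)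

lemma stochastic_matpow:
  assumes "stochastic P" shows "stochastic (matpow P n)"
proof -
  have "distribution (matpow P n i)" for i
    using distribution_vecmat_matpow[OF _ assms, of "\<lambda>l. if l = i then 1 else 0" n]
    by (simp add: vecmat_unit distribution_def)
  then show ?thesis by (simp add: stochastic_def distribution_def)
qed

lemma stationary_vecmat_matpow:
  assumes "stationary P \<pi>" shows "vecmat \<pi> (matpow P n) = \<pi>"
  using assms by (induction n) (simp_all add: vecmat_matmul stationary_def)

lemma l1_norm_scale: "l1_norm (\<lambda>x. c * v x) = \<bar>c\<bar> * l1_norm v"
  by (simp add: l1_norm_def abs_mult sum_distrib_left)

lemma l1_norm_diff_triangle:
  "l1_norm (\<lambda>i. a i - c i) \<le> l1_norm (\<lambda>i. a i - b i) + l1_norm (\<lambda>i. b i - c i)"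
proof -
  have "(\<Sum>i\<in>UNIV. \<bar>a i - c i\<bar>) \<le> (\<Sum>i\<in>UNIV. \<bar>a i - b i\<bar> + \<bar>b i - c i\<bar>)"
    by (rule sum_mono) (use abs_triangle_ineq[of "a i - b i" "b i - c i" for i] in simp)
  then show ?thesis unfolding l1_norm_def by (simp add: sum.distrib)
qed

lemma l1_norm_diff_distributions_le:
  assumes "distribution a" "distribution b" shows "l1_norm (\<lambda>i. a i - b i) \<le> 2"
proof -
  have "l1_norm (\<lambda>i. a i - b i) \<le> (\<Sum>i\<in>UNIV. a i + b i)"
    unfolding l1_norm_def by (rule sum_mono) (use assms in \<open>auto simp: distribution_def abs_le_iff\<close>)
  also have "\<dots> = 2" using assms by (simp add: sum.distrib distribution_def)
  finally show ?thesis .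
qed

lemma tv_dist_l1_norm: "tv_dist a b = l1_norm (\<lambda>i. a i - b i) / 2"
  by (simp add: tv_dist_def l1_norm_def)

lemma tv_dist_triangle: "tv_dist a c \<le> tv_dist a b + tv_dist b c"
  using l1_norm_diff_triangle[of a c b] by (simp add: tv_dist_l1_norm)

lemma tv_dist_distributions_le_1: "distribution a \<Longrightarrow> distribution b \<Longrightarrow> tv_dist a b \<le> 1"
  using l1_norm_diff_distributions_le by (simp add: tv_dist_l1_norm)

text \<open>Doeblin's bound: subtracting the uniform lower bound \<open>\<delta>\<close> from every entry of \<open>Q\<close> does not
  change \<open>w Q\<close> when \<open>w\<close> sums to zero, and leaves a nonnegative matrix with row sums \<open>1 - n \<delta>\<close>.\<close>
lemma l1_norm_vecmat_doeblin:
  fixes Q :: "'n::finite \<Rightarrow> 'n \<Rightarrow> real"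
  assumes st: "stochastic Q" and lb: "\<And>i j. \<delta> \<le> Q i j" and z: "\<delta> = 0 \<or> sum w UNIV = 0"
  shows "l1_norm (vecmat w Q) \<le> (1 - real (card (UNIV::'n set)) * \<delta>) * l1_norm w"
proof -
  have shift: "vecmat w Q j = (\<Sum>i\<in>UNIV. w i * (Q i j - \<delta>))" for j
  proof -
    have "(\<Sum>i\<in>UNIV. w i * (Q i j - \<delta>)) = vecmat w Q j - \<delta> * sum w UNIV"
      by (simp add: vecmat_def right_diff_distrib sum_subtractf sum_distrib_left mult.commute)
    then show ?thesis using z by auto
  qed
  have "l1_norm (vecmat w Q) \<le> (\<Sum>j\<in>UNIV. \<Sum>i\<in>UNIV. \<bar>w i\<bar> * (Q i j - \<delta>))"
    unfolding l1_norm_def shift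
    by (rule sum_mono, rule order_trans[OF sum_abs]) (simp add: abs_mult lb)
  also have "\<dots> = (\<Sum>i\<in>UNIV. \<bar>w i\<bar> * (\<Sum>j\<in>UNIV. Q i j - \<delta>))"
    by (subst sum.swap) (simp add: sum_distrib_left)
  also have "\<dots> = (1 - real (card (UNIV::'n set)) * \<delta>) * l1_norm w"
    using st by (simp add: stochastic_def sum_subtractf l1_norm_def sum_distrib_right mult.commute)
  finally show ?thesis .
qed

lemma l1_norm_vecmat_le: "stochastic Q \<Longrightarrow> l1_norm (vecmat w Q) \<le> l1_norm w"
  using l1_norm_vecmat_doeblin[of Q 0 w] by (simp add: stochastic_def)

lemma add_closed_add_mult_mem:
  fixes S :: "nat set"
  assumes add: "\<And>x y. x \<in> S \<Longrightarrow> y \<in> S \<Longrightarrow> x + y \<in> S" and "x \<in> S" "y \<in> S"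
  shows "x + k * y \<in> S"
proof (induction k)
  case (Suc k)
  then show ?case using add[OF Suc.IH \<open>y \<in> S\<close>] by (simp add: add_ac)
qed (simp add: \<open>x \<in> S\<close>)

text \<open>The least positive difference \<open>g\<close> between two elements \<open>n, n + g\<close> of \<open>S\<close> divides every
  \<open>x = q g + r \<in> S\<close>: otherwise \<open>r\<close> would be a smaller one, as
  \<open>(n + q (n + g)) + r = (x + n) + q n\<close>.\<close>
lemma add_closed_Gcd_1_consecutive:
  fixes S :: "nat set"
  assumes add: "\<And>x y. x \<in> S \<Longrightarrow> y \<in> S \<Longrightarrow> x + y \<in> S" and "0 \<notin> S" and "Gcd S = 1"
  shows "\<exists>n\<in>S. Suc n \<in> S"
proof -
  obtain s where s: "s \<in> S" using \<open>Gcd S = 1\<close> by fastforce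
  define D where "D = {d. 0 < d \<and> (\<exists>n\<in>S. n + d \<in> S)}"
  have "s \<in> D" unfolding D_def using s add[OF s s] \<open>0 \<notin> S\<close> by (auto intro!: gr0I)
  define g where "g = (LEAST d. d \<in> D)"
  have "g \<in> D" unfolding g_def using \<open>s \<in> D\<close> by (rule LeastI)
  then obtain n where n: "n \<in> S" "n + g \<in> S" and "0 < g" unfolding D_def by blast
  have "g dvd x" if x: "x \<in> S" for x
  proof (rule ccontr)
    assume "\<not> g dvd x"
    then have "0 < x mod g" by (simp add: dvd_eq_mod_eq_0)
    moreover have "n + (x div g) * (n + g) \<in> S"
      by (rule add_closed_add_mult_mem[OF add n])
    moreover have "(x + n) + (x div g) * n \<in> S"
      by (rule add_closed_add_mult_mem[OF add add[OF x n(1)] n(1)])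
    moreover have "(x + n) + (x div g) * n = n + (x div g) * (n + g) + x mod g"
      using div_mult_mod_eq[of x g] by (simp add: algebra_simps)
    ultimately have "x mod g \<in> D" unfolding D_def by auto
    then have "g \<le> x mod g" unfolding g_def by (rule Least_le)
    with mod_less_divisor[OF \<open>0 < g\<close>, of x] show False by simp
  qed
  then have "g dvd Gcd S" by (rule Gcd_greatest)
  then have "g = 1" using \<open>Gcd S = 1\<close> by simp
  with n show ?thesis by auto
qed

text \<open>Write \<open>t = a n + b\<close> with \<open>b < n \<le> a\<close>; then \<open>t = (a - b) n + b (n + 1)\<close>.\<close>
lemma add_closed_consecutive_ge_mem:
  fixes S :: "nat set"
  assumes add: "\<And>x y. x \<in> S \<Longrightarrow> y \<in> S \<Longrightarrow> x + y \<in> S"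
    and n: "n \<in> S" "Suc n \<in> S" "0 < n" and t: "n * n \<le> t"
  shows "t \<in> S"
proof -
  define a b where "a = t div n" and "b = t mod n"
  have "b < n" unfolding b_def using \<open>0 < n\<close> by simp
  moreover have "n \<le> a" unfolding a_def using div_le_mono[OF t, of n] \<open>0 < n\<close> by simp
  ultimately have "a - b = Suc (a - b - 1)" by simp
  then have "n + (a - b - 1) * n = (a - b) * n" by (metis mult_Suc)
  then have "(a - b) * n \<in> S" using add_closed_add_mult_mem[OF add n(1) n(1)] by metis
  moreover have "t = (a - b) * n + b * Suc n"
    using div_mult_mod_eq[of t n] \<open>b < n\<close> \<open>n \<le> a\<close> unfolding a_def b_def
    by (simp add: algebra_simps diff_mult_distrib)
  ultimately show ?thesis using add_closed_add_mult_mem[OF add _ n(2)] by metis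
qed

lemma add_closed_Gcd_1_eventually_mem:
  fixes S :: "nat set"
  assumes add: "\<And>x y. x \<in> S \<Longrightarrow> y \<in> S \<Longrightarrow> x + y \<in> S" and "0 \<notin> S" and "Gcd S = 1"
  shows "\<exists>N. \<forall>t\<ge>N. t \<in> S"
proof -
  obtain n where "n \<in> S" "Suc n \<in> S" using add_closed_Gcd_1_consecutive[OF assms] by blast
  moreover from \<open>n \<in> S\<close> \<open>0 \<notin> S\<close> have "0 < n" by (auto intro!: gr0I)
  ultimately show ?thesis using add_closed_consecutive_ge_mem[OF add] by blast
qed

lemma matpow_pos_add:
  assumes st: "stochastic P" and "0 < matpow P a i l" "0 < matpow P b l j"
  shows "0 < matpow P (a + b) i j"
proof -
  have "0 < matpow P a i l * matpow P b l j" using assms by simp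
  also have "\<dots> \<le> (\<Sum>l'\<in>UNIV. matpow P a i l' * matpow P b l' j)"
    using stochastic_matpow[OF st] by (intro member_le_sum) (simp_all add: stochastic_def)
  finally show ?thesis by (simp only: matpow_add_entry)
qed

lemma aperiodic_matpow_diag_eventually_pos:
  assumes st: "stochastic P" and ap: "aperiodic_chain P"
  shows "\<exists>N. \<forall>n\<ge>N. 0 < matpow P n i i"
proof -
  let ?S = "{k. 1 \<le> k \<and> 0 < matpow P k i i}"
  have "x + y \<in> ?S" if "x \<in> ?S" "y \<in> ?S" for x y
    using that matpow_pos_add[OF st, of x i i y i] by simp
  moreover have "Gcd ?S = 1" using ap by (simp add: aperiodic_chain_def)
  ultimately show ?thesis using add_closed_Gcd_1_eventually_mem[of ?S] by auto
qed

lemma irreducible_aperiodic_matpow_pos: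
  assumes st: "stochastic P" and irr: "irreducible_chain P" and ap: "aperiodic_chain P"
  shows "\<exists>r. \<forall>i j. 0 < matpow P r i j"
proof -
  obtain N where N: "\<And>i n. N i \<le> n \<Longrightarrow> 0 < matpow P n i i"
    using aperiodic_matpow_diag_eventually_pos[OF st ap] by metis
  obtain k where k: "\<And>i j. 0 < matpow P (k i j) i j"
    using irr unfolding irreducible_chain_def by metis
  define r where "r = Max (range N) + Max (range (case_prod k))"
  have "0 < matpow P r i j" for i j
  proof -
    have "k i j \<le> Max (range (case_prod k))"
      by (rule Max_ge) (auto intro: image_eqI[where x="(i, j)"])
    moreover have "N i \<le> Max (range N)" by (rule Max_ge) auto
    ultimately have "N i \<le> r - k i j" and "r = r - k i j + k i j" unfolding r_def by arith+
    then show ?thesis using matpow_pos_add[OF st N k[of i j]] by metis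
  qed
  then show ?thesis by blast
qed

lemma stochastic_lower_bound_le:
  fixes Q :: "'n::finite \<Rightarrow> 'n \<Rightarrow> real"
  assumes "stochastic Q" "\<And>i j. \<delta> \<le> Q i j"
  shows "real (card (UNIV::'n set)) * \<delta> \<le> 1"
proof -
  have "(\<Sum>j\<in>(UNIV::'n set). \<delta>) \<le> (\<Sum>j\<in>UNIV. Q undefined j)" by (intro sum_mono assms(2))
  with assms(1) show ?thesis by (simp add: stochastic_def)
qed

lemma l1_norm_vecmat_matpow_decay:
  fixes Q :: "'n::finite \<Rightarrow> 'n \<Rightarrow> real"
  assumes st: "stochastic Q" and lb: "\<And>i j. \<delta> \<le> Q i j" and z: "sum w UNIV = 0"
  shows "l1_norm (vecmat w (matpow Q k)) \<le> (1 - real (card (UNIV::'n set)) * \<delta>) ^ k * l1_norm w"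
proof (induction k)
  case (Suc k)
  let ?c = "1 - real (card (UNIV::'n set)) * \<delta>"
  have "sum (vecmat w (matpow Q k)) UNIV = 0"
    using sum_vecmat_stochastic[OF stochastic_matpow[OF st]] z by simp
  then have "l1_norm (vecmat w (matpow Q (Suc k))) \<le> ?c * l1_norm (vecmat w (matpow Q k))"
    using l1_norm_vecmat_doeblin[OF st lb] by (simp add: vecmat_matmul)
  also have "\<dots> \<le> ?c * (?c ^ k * l1_norm w)"
    using Suc stochastic_lower_bound_le[OF st lb] by (intro mult_left_mono) auto
  finally show ?case by simp
qed simp

theorem mixing_time_exists:
  fixes P :: "'n::finite \<Rightarrow> 'n \<Rightarrow> real"
  assumes st: "stochastic P" and irr: "irreducible_chain P" and ap: "aperiodic_chain P"
    and sta: "stationary P \<pi>" and "0 < e"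
  shows "\<exists>T. \<forall>\<nu>. distribution \<nu> \<longrightarrow> tv_dist (vecmat \<nu> (matpow P T)) \<pi> \<le> e"
proof -
  obtain r where pos: "\<And>i j. 0 < matpow P r i j"
    using irreducible_aperiodic_matpow_pos[OF st irr ap] by blast
  define Q where "Q = matpow P r"
  define \<delta> where "\<delta> = Min (range (case_prod Q))"
  have stQ: "stochastic Q" unfolding Q_def by (rule stochastic_matpow[OF st])
  have lb: "\<delta> \<le> Q i j" for i j
    unfolding \<delta>_def by (rule Min_le) (auto intro: image_eqI[where x="(i, j)"])
  have "\<delta> \<in> range (case_prod Q)" unfolding \<delta>_def by (rule Min_in) auto
  then have "0 < \<delta>" using pos unfolding Q_def by auto
  define c where "c = 1 - real (card (UNIV::'n set)) * \<delta>"
  have "c < 1" unfolding c_def using \<open>0 < \<delta>\<close> by (simp add: card_gt_0_iff)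
  have "0 \<le> c" unfolding c_def using stochastic_lower_bound_le[OF stQ lb] by simp
  obtain k where "c ^ k < e" using real_arch_pow_inv[OF \<open>0 < e\<close> \<open>c < 1\<close>] by blast
  have "tv_dist (vecmat \<nu> (matpow P (r * k))) \<pi> \<le> e" if "distribution \<nu>" for \<nu>
  proof -
    have "distribution \<pi>" using sta by (simp add: stationary_def)
    have "tv_dist (vecmat \<nu> (matpow P (r * k))) \<pi>
        = l1_norm (vecmat (\<lambda>i. \<nu> i - \<pi> i) (matpow Q k)) / 2"
      unfolding tv_dist_l1_norm vecmat_diff Q_def vecmat_matpow_mult[symmetric]
      by (simp add: stationary_vecmat_matpow[OF sta])
    also have "\<dots> \<le> c ^ k * l1_norm (\<lambda>i. \<nu> i - \<pi> i) / 2"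
      using l1_norm_vecmat_matpow_decay[OF stQ lb, of "\<lambda>i. \<nu> i - \<pi> i" k] \<open>distribution \<nu>\<close>
        \<open>distribution \<pi>\<close> unfolding c_def by (simp add: sum_subtractf distribution_def)
    also have "\<dots> \<le> c ^ k"
      using l1_norm_diff_distributions_le[OF \<open>distribution \<nu>\<close> \<open>distribution \<pi>\<close>] \<open>0 \<le> c\<close>
      by (simp add: mult_left_mono)
    finally show ?thesis using \<open>c ^ k < e\<close> by simp
  qed
  then show ?thesis by blast
qed

lemma of_nat_divide_le_1: "i \<le> T \<Longrightarrow> real i / real T \<le> 1"
  by (cases "T = 0") (simp_all add: divide_le_eq_1)

lemma stochastic_interp:
  assumes "stochastic P0" "stochastic P1" "0 \<le> t" "t \<le> 1"
  shows "stochastic (interp P0 P1 t)"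
  using assms unfolding stochastic_def interp_def
  by (simp add: sum.distrib sum_distrib_left[symmetric])

lemma vecmat_interp_diff:
  "vecmat y (interp P0 P1 t) x - vecmat y P1 x = (1 - t) * (vecmat y P0 x - vecmat y P1 x)"
  unfolding vecmat_def interp_def
  by (simp add: algebra_simps sum.distrib sum_distrib_left sum_subtractf)

lemma l1_norm_vecmat_interp_diff_le:
  assumes "stochastic P0" "stochastic P1" "distribution y" "t \<le> 1"
  shows "l1_norm (\<lambda>x. vecmat y (interp P0 P1 t) x - vecmat y P1 x) \<le> 2 * (1 - t)"
proof -
  have "l1_norm (\<lambda>x. vecmat y P0 x - vecmat y P1 x) \<le> 2"
    using assms by (intro l1_norm_diff_distributions_le distribution_vecmat)
  then have "(1 - t) * l1_norm (\<lambda>x. vecmat y P0 x - vecmat y P1 x) \<le> (1 - t) * 2"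
    using \<open>t \<le> 1\<close> by (intro mult_left_mono) simp_all
  then show ?thesis
    unfolding vecmat_interp_diff l1_norm_scale using \<open>t \<le> 1\<close> by simp
qed

lemma distribution_foldl_vecmat:
  assumes "\<And>i. i \<in> set xs \<Longrightarrow> stochastic (Q i)" "distribution \<mu>"
  shows "distribution (foldl (\<lambda>\<mu> i. vecmat \<mu> (Q i)) \<mu> xs)"
  using assms by (induction xs arbitrary: \<mu>) (simp_all add: distribution_vecmat)

lemma distribution_adiabatic_evol:
  assumes "stochastic P0" "stochastic P1" "distribution \<nu>"
  shows "distribution (adiabatic_evol P0 P1 T \<nu>)"
  unfolding adiabatic_evol_def
  using assms by (intro distribution_foldl_vecmat stochastic_interp of_nat_divide_le_1) auto

lemma l1_norm_foldl_vecmat_perturb: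
  assumes P: "stochastic P"
    and Q: "\<And>i. i \<in> set xs \<Longrightarrow> stochastic (Q i)"
    and close: "\<And>i y. i \<in> set xs \<Longrightarrow> distribution y \<Longrightarrow>
                  l1_norm (\<lambda>x. vecmat y (Q i) x - vecmat y P x) \<le> d"
    and "distribution \<mu>"
  shows "l1_norm (\<lambda>x. foldl (\<lambda>\<mu> i. vecmat \<mu> (Q i)) \<mu> xs x - vecmat \<mu> (matpow P (length xs)) x)
           \<le> real (length xs) * d"
  using Q close \<open>distribution \<mu>\<close>
proof (induction xs arbitrary: \<mu>)
  case Nil
  then show ?case by (simp add: l1_norm_def)
next
  case (Cons i xs)
  let ?n = "length xs" and ?\<mu>' = "vecmat \<mu> (Q i)"
  have "distribution ?\<mu>'" using Cons.prems by (intro distribution_vecmat) auto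
  then have "l1_norm (\<lambda>x. foldl (\<lambda>\<mu> i. vecmat \<mu> (Q i)) ?\<mu>' xs x - vecmat ?\<mu>' (matpow P ?n) x)
      \<le> ?n * d"
    using Cons by simp
  moreover have "l1_norm (\<lambda>x. vecmat ?\<mu>' (matpow P ?n) x - vecmat (vecmat \<mu> P) (matpow P ?n) x)
      \<le> d"
  proof -
    have "l1_norm (vecmat (\<lambda>x. ?\<mu>' x - vecmat \<mu> P x) (matpow P ?n))
        \<le> l1_norm (\<lambda>x. ?\<mu>' x - vecmat \<mu> P x)"
      by (rule l1_norm_vecmat_le[OF stochastic_matpow[OF P]])
    also have "\<dots> \<le> d" using Cons.prems by simp
    finally show ?thesis by (simp only: vecmat_diff)
  qed
  ultimately show ?case
    unfolding foldl_Cons length_Cons vecmat_matpow_Suc_left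
    using l1_norm_diff_triangle[of "foldl (\<lambda>\<mu> i. vecmat \<mu> (Q i)) ?\<mu>' xs"
        "vecmat (vecmat \<mu> P) (matpow P ?n)" "vecmat ?\<mu>' (matpow P ?n)"]
    by (simp add: algebra_simps)
qed

lemma tv_dist_adiabatic_evol_le:
  fixes P0 P1 :: "'n::finite \<Rightarrow> 'n \<Rightarrow> real" and \<tau> T :: nat
  assumes s0: "stochastic P0" and s1: "stochastic P1" and "1 \<le> T" "\<tau> \<le> Suc T"
    and mix: "\<And>\<mu>. distribution \<mu> \<Longrightarrow> tv_dist (vecmat \<mu> (matpow P1 \<tau>)) \<pi> \<le> \<epsilon> / 2"
    and slow: "2 * real \<tau> * (real \<tau> - 1) \<le> \<epsilon> * real T"
    and "distribution \<nu>"
  shows "tv_dist (adiabatic_evol P0 P1 T \<nu>) \<pi> \<le> \<epsilon>"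
proof -
  let ?Q = "\<lambda>i. interp P0 P1 (real i / real T)"
  define a where "a = Suc T - \<tau>"
  define \<mu> where "\<mu> = foldl (\<lambda>\<mu> i. vecmat \<mu> (?Q i)) \<nu> [0..<a]"
  have stQ: "stochastic (?Q i)" if "i \<le> T" for i
    using that s0 s1 by (intro stochastic_interp of_nat_divide_le_1) auto
  have "distribution \<mu>"
    unfolding \<mu>_def using \<open>distribution \<nu>\<close> by (intro distribution_foldl_vecmat stQ) (auto simp: a_def)
  have "[0..<Suc T] = [0..<a] @ [a..<Suc T]"
    using upt_add_eq_append[of 0 a \<tau>] \<open>\<tau> \<le> Suc T\<close> by (simp add: a_def)
  then have evol: "adiabatic_evol P0 P1 T \<nu> = foldl (\<lambda>\<mu> i. vecmat \<mu> (?Q i)) \<mu> [a..<Suc T]"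
    unfolding adiabatic_evol_def \<mu>_def by simp
  have tail: "i \<le> T" "real T - real i \<le> real \<tau> - 1" if "i \<in> set [a..<Suc T]" for i
    using that \<open>\<tau> \<le> Suc T\<close> by (auto simp: a_def)
  have step: "l1_norm (\<lambda>x. vecmat y (?Q i) x - vecmat y P1 x) \<le> 2 * (real \<tau> - 1) / real T"
    if "i \<in> set [a..<Suc T]" "distribution y" for i y
  proof -
    have "2 * (1 - real i / real T) = 2 * (real T - real i) / real T"
      using \<open>1 \<le> T\<close> by (simp add: field_simps)
    also have "\<dots> \<le> 2 * (real \<tau> - 1) / real T"
      using tail(2)[OF that(1)] by (intro divide_right_mono) simp_all
    finally show ?thesis
      using l1_norm_vecmat_interp_diff_le[OF s0 s1 that(2) of_nat_divide_le_1[OF tail(1)[OF that(1)]]]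
      by simp
  qed
  have "length [a..<Suc T] = \<tau>" unfolding length_upt a_def using \<open>\<tau> \<le> Suc T\<close> by simp
  then have "l1_norm (\<lambda>x. adiabatic_evol P0 P1 T \<nu> x - vecmat \<mu> (matpow P1 \<tau>) x)
      \<le> real \<tau> * (2 * (real \<tau> - 1) / real T)"
    unfolding evol
    using l1_norm_foldl_vecmat_perturb[where xs="[a..<Suc T]" and Q="?Q",
        OF s1 stQ[OF tail(1)] step \<open>distribution \<mu>\<close>] by simp
  also have "\<dots> \<le> \<epsilon>" using slow \<open>1 \<le> T\<close> by (simp add: field_simps)
  finally have "tv_dist (adiabatic_evol P0 P1 T \<nu>) (vecmat \<mu> (matpow P1 \<tau>)) \<le> \<epsilon> / 2"
    by (simp add: tv_dist_l1_norm)
  then show ?thesis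
    using tv_dist_triangle[of "adiabatic_evol P0 P1 T \<nu>" \<pi> "vecmat \<mu> (matpow P1 \<tau>)"]
      mix[OF \<open>distribution \<mu>\<close>] by linarith
qed

lemma adiabatic_threshold:
  fixes \<tau> T :: nat
  assumes "0 < \<epsilon>" "\<epsilon> < 2" "2 * (real \<tau>)\<^sup>2 / \<epsilon> < real T + 1"
  shows "\<tau> \<le> Suc T" "2 * real \<tau> * (real \<tau> - 1) \<le> \<epsilon> * real T"
proof -
  have bound: "2 * (real \<tau>)\<^sup>2 < \<epsilon> * (real T + 1)" using assms by (simp add: field_simps)
  show "\<tau> \<le> Suc T"
  proof (cases "\<tau> = 0")
    case False
    then have "real \<tau> \<le> (real \<tau>)\<^sup>2" by (simp add: power2_eq_square)
    moreover have "\<epsilon> * (real T + 1) \<le> 2 * (real T + 1)"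
      using \<open>\<epsilon> < 2\<close> by (intro mult_right_mono) simp_all
    ultimately have "real \<tau> < real T + 1" using bound by argo
    then show ?thesis by simp
  qed simp
  show "2 * real \<tau> * (real \<tau> - 1) \<le> \<epsilon> * real T"
  proof (cases "\<tau> = 0")
    case False
    then have "\<epsilon> \<le> 2 * real \<tau>" using \<open>\<epsilon> < 2\<close> by simp
    then show ?thesis using bound by (simp add: power2_eq_square algebra_simps)
  qed (use \<open>0 < \<epsilon>\<close> in simp)
qed

theorem proposition1:
  fixes P0 P1 :: "'n::finite \<Rightarrow> 'n \<Rightarrow> real" and \<pi>1 :: "'n \<Rightarrow> real" and \<epsilon> :: real
  assumes "stochastic P0" "irreducible_chain P0" "aperiodic_chain P0"
    and "stochastic P1" "irreducible_chain P1" "aperiodic_chain P1"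
    and "stationary P1 \<pi>1"
    and "0 < \<epsilon>"
  shows "adiabatic_set P0 P1 \<pi>1 \<epsilon> \<noteq> {} \<and>
         real (t_ad P0 P1 \<pi>1 \<epsilon>) \<le> 2 * (real (t_mix P1 \<pi>1 (\<epsilon> / 2)))^2 / \<epsilon>"
proof -
  define \<tau> where "\<tau> = t_mix P1 \<pi>1 (\<epsilon> / 2)"
  define Tstar where "Tstar = nat \<lfloor>2 * (real \<tau>)\<^sup>2 / \<epsilon>\<rfloor>"
  have "\<tau> \<in> {T. \<forall>\<nu>. distribution \<nu> \<longrightarrow> tv_dist (vecmat \<nu> (matpow P1 T)) \<pi>1 \<le> \<epsilon> / 2}"
    unfolding \<tau>_def t_mix_def
    by (rule Inf_nat_def1) (use mixing_time_exists[OF assms(4-7), of "\<epsilon> / 2"] \<open>0 < \<epsilon>\<close> in auto)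
  then have mix: "\<And>\<mu>. distribution \<mu> \<Longrightarrow> tv_dist (vecmat \<mu> (matpow P1 \<tau>)) \<pi>1 \<le> \<epsilon> / 2"
    by blast
  have "tv_dist (adiabatic_evol P0 P1 T \<nu>) \<pi>1 \<le> \<epsilon>"
    if "1 \<le> T" "Tstar \<le> T" "distribution \<nu>" for T \<nu>
  proof (cases "\<epsilon> < 2")
    case True
    have "2 * (real \<tau>)\<^sup>2 / \<epsilon> < real T + 1" using \<open>Tstar \<le> T\<close> unfolding Tstar_def by linarith
    with True show ?thesis
      using tv_dist_adiabatic_evol_le[OF assms(1,4) \<open>1 \<le> T\<close> _ mix _ \<open>distribution \<nu>\<close>]
        adiabatic_threshold[OF \<open>0 < \<epsilon>\<close>] by blast
  next
    case False
    have "distribution \<pi>1" using assms(7) by (simp add: stationary_def)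
    with False show ?thesis
      using tv_dist_distributions_le_1[OF distribution_adiabatic_evol[where T=T, OF assms(1,4) that(3)]]
      by fastforce
  qed
  then have "Tstar \<in> adiabatic_set P0 P1 \<pi>1 \<epsilon>" unfolding adiabatic_set_def by blast
  moreover from this have "t_ad P0 P1 \<pi>1 \<epsilon> \<le> Tstar" unfolding t_ad_def by (rule cInf_lower) simp
  moreover have "real Tstar \<le> 2 * (real \<tau>)\<^sup>2 / \<epsilon>" unfolding Tstar_def using \<open>0 < \<epsilon>\<close> by simp
  ultimately show ?thesis unfolding \<tau>_def by fastforce
qed

end
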